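(* Let $\mathscr H$ be a complex Hilbert space and $\mathbf{X},\mathbf{Y}\in\mathbb{B}(\mathscr H)^d$. Then $$\max\{w_e(\mathbf{X}),w_e(\mathbf{Y})\}\le w_e\left(\begin{bmatrix}\mathbf{X}&\mathbf{Y}\\-\mathbf{Y}&-\mathbf{X}\end{bmatrix}\right)\le w_e(\mathbf{X})+w_e(\mathbf{Y}).$$
   Context: $\mathbb{B}(\mathscr H)$ denotes the bounded linear operators on $\mathscr H$. $w_e(\mathbf{T})=\sup\{(\sum_{k}|\langle T_kx,x\rangle|^2)^{1/2}: \|x\|=1\}$ for $\mathbf{T}=(T_1,\dots,T_d)$; $-\mathbf{X}=(-X_1,\dots,-X_d)$. For $d$-tuples, $\begin{bmatrix}\mathbf{X}&\mathbf{Y}\\\mathbf{Z}&\mathbf{W}\end{bmatrix}$ denotes the $d$-tuple $\left(\begin{bmatrix}X_k&Y_k\\Z_k&W_k\end{bmatrix}\right)_{k=1}^d$ of operators on $\mathscr H\oplus\mathscr H$. *)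

theory Defs
  imports "HOL-Analysis.Analysis"
begin

class complex_vector = real_vector +
  fixes scaleC :: "complex \<Rightarrow> 'a \<Rightarrow> 'a" (infixr \<open>*\<^sub>C\<close> 75)
  assumes scaleC_add_right: "a *\<^sub>C (x + y) = a *\<^sub>C x + a *\<^sub>C y"
    and scaleC_add_left: "(a + b) *\<^sub>C x = a *\<^sub>C x + b *\<^sub>C x"
    and scaleC_scaleC: "a *\<^sub>C (b *\<^sub>C x) = (a * b) *\<^sub>C x"
    and scaleC_one: "1 *\<^sub>C x = x"
    and scaleR_scaleC: "scaleR r x = complex_of_real r *\<^sub>C x"

class complex_inner = real_inner + complex_vector +
  fixes cinner :: "'a \<Rightarrow> 'a \<Rightarrow> complex"
  assumes cinner_commute: "cinner x y = cnj (cinner y x)"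
    and cinner_add_left: "cinner (x + y) z = cinner x z + cinner y z"
    and cinner_scaleC_left: "cinner (a *\<^sub>C x) y = cnj a * cinner x y"
    and inner_is_Re_cinner: "inner x y = Re (cinner x y)"

class complex_hilbert = complex_inner + complete_space

definition bounded_clinear :: "('a::complex_inner \<Rightarrow> 'a) \<Rightarrow> bool" where
  "bounded_clinear f \<longleftrightarrow>
     (\<forall>x y. f (x + y) = f x + f y) \<and> (\<forall>c x. f (c *\<^sub>C x) = c *\<^sub>C f x) \<and>
     (\<exists>K. \<forall>x. norm (f x) \<le> norm x * K)"

instantiation prod :: (complex_vector, complex_vector) complex_vector
begin
definition scaleC_prod_def: "c *\<^sub>C p = (c *\<^sub>C fst p, c *\<^sub>C snd p)"
instance
  by standard (simp_all add: scaleC_prod_def scaleC_add_right scaleC_add_left scaleC_scaleC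
      scaleC_one scaleR_scaleC prod_eq_iff)
end

instantiation prod :: (complex_inner, complex_inner) complex_inner
begin
definition cinner_prod_def: "cinner p q = cinner (fst p) (fst q) + cinner (snd p) (snd q)"
instance
proof
  fix x y z :: "'a \<times> 'b" and a :: complex
  show "cinner x y = cnj (cinner y x)"
    unfolding cinner_prod_def by (metis complex_cnj_add cinner_commute)
  show "cinner (x + y) z = cinner x z + cinner y z"
    unfolding cinner_prod_def by (simp add: cinner_add_left)
  show "cinner (a *\<^sub>C x) y = cnj a * cinner x y"
    unfolding cinner_prod_def scaleC_prod_def by (simp add: cinner_scaleC_left distrib_left)
  show "inner x y = Re (cinner x y)"
    unfolding cinner_prod_def inner_prod_def by (simp add: inner_is_Re_cinner)
qed
end

instance prod :: (complex_hilbert, complex_hilbert) complex_hilbert ..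

text \<open>A d-tuple T = (T_1,...,T_d) is represented as a function on indices 0..d-1.
  w_e(T) = sup { (sum_k |<T_k x, x>|^2)^(1/2) : ||x|| = 1 }; 0 is included in the set
  so that the supremum is also well defined (= 0) on the trivial space.\<close>
definition euclid_op_radius :: "nat \<Rightarrow> (nat \<Rightarrow> 'a::complex_inner \<Rightarrow> 'a) \<Rightarrow> real" where
  "euclid_op_radius d T =
     Sup (insert 0 {sqrt (\<Sum>k<d. (cmod (cinner (T k x) x))\<^sup>2) | x. norm x = 1})"

definition tuple_neg :: "(nat \<Rightarrow> 'a::complex_vector \<Rightarrow> 'a) \<Rightarrow> nat \<Rightarrow> 'a \<Rightarrow> 'a" where
  "tuple_neg X = (\<lambda>k x. - X k x)"

text \<open>Block operator tuple [[X, Y], [Z, W]] acting on H \<oplus> H.\<close>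
definition block_tuple ::
  "(nat \<Rightarrow> 'a \<Rightarrow> 'a) \<Rightarrow> (nat \<Rightarrow> 'a \<Rightarrow> 'a) \<Rightarrow> (nat \<Rightarrow> 'a \<Rightarrow> 'a) \<Rightarrow> (nat \<Rightarrow> 'a \<Rightarrow> 'a)
     \<Rightarrow> nat \<Rightarrow> 'a \<times> 'a \<Rightarrow> ('a::complex_vector) \<times> 'a" where
  "block_tuple X Y Z W = (\<lambda>k p. (X k (fst p) + Y k (snd p), Z k (fst p) + W k (snd p)))"

end

theory Submission
  imports Defs
begin

text \<open>For a unit vector \<open>(x, y)\<close> the quadratic form of the block tuple decomposes as
  \<open>\<langle>X x, x\<rangle> - \<langle>X y, y\<rangle> + (i/2)(\<langle>Y u, u\<rangle> - \<langle>Y v, v\<rangle>)\<close> with \<open>u, v = x \<plusminus> i y\<close>; since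
  \<open>\<parallel>u\<parallel>\<^sup>2 + \<parallel>v\<parallel>\<^sup>2 = 2\<close> by the parallelogram law, homogeneity of the form and the triangle
  inequality for the Euclidean norm give the upper bound. For the lower bounds, \<open>(x, 0)\<close>
  reproduces the form of X and \<open>(x, i x)/\<surd>2\<close> reproduces that of Y up to a unimodular factor.\<close>

lemma cinner_add_right: "cinner x (y + z) = cinner x y + cinner x z"
  by (metis cinner_add_left cinner_commute complex_cnj_add)

lemma cinner_scaleC_right: "cinner x (a *\<^sub>C y) = a * cinner x y"
  by (metis cinner_commute cinner_scaleC_left complex_cnj_cnj complex_cnj_mult)

lemma cinner_zero_left [simp]: "cinner 0 y = 0"
  using cinner_add_left[of 0 0 y] by simp

lemma cinner_minus_left: "cinner (- x) y = - cinner x y"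
  using cinner_add_left[of x "- x" y] cinner_add_left[of 0 0 y]
  by (simp add: eq_neg_iff_add_eq_0 add.commute)

lemma cinner_minus_right: "cinner y (- x) = - cinner y x"
  by (metis cinner_commute cinner_minus_left complex_cnj_minus)

lemma cinner_diff_left: "cinner (x - z) y = cinner x y - cinner z y"
  by (simp only: diff_conv_add_uminus cinner_add_left cinner_minus_left)

lemma cinner_diff_right: "cinner y (x - z) = cinner y x - cinner y z"
  by (simp only: diff_conv_add_uminus cinner_add_right cinner_minus_right)

lemma cinner_self: "cinner x x = complex_of_real ((norm x)\<^sup>2)"
proof -
  have "Im (cinner x x) = 0"
    using cinner_commute[of x x] by (metis cnj.simps(2) neg_equal_zero)
  moreover have "Re (cinner x x) = (norm x)\<^sup>2"
    by (simp add: power2_norm_eq_inner inner_is_Re_cinner)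
  ultimately show ?thesis by (simp add: complex_eq_iff)
qed

lemma norm_scaleC: "norm (a *\<^sub>C (x::'a::complex_inner)) = cmod a * norm x"
proof -
  have "complex_of_real ((norm (a *\<^sub>C x))\<^sup>2) = cnj a * a * cinner x x"
    by (simp only: cinner_self[symmetric] cinner_scaleC_left cinner_scaleC_right mult.assoc mult.left_commute)
  also have "\<dots> = complex_of_real ((cmod a)\<^sup>2) * complex_of_real ((norm x)\<^sup>2)"
    by (metis cinner_self complex_norm_square mult.commute)
  finally have "(norm (a *\<^sub>C x))\<^sup>2 = (cmod a * norm x)\<^sup>2"
    by (metis of_real_eq_iff of_real_mult power_mult_distrib)
  thus ?thesis by (simp add: power2_eq_iff_nonneg)
qed

text \<open>Cauchy--Schwarz for the real and imaginary parts separately; the factor 2 is harmless, as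
  the bound only serves to show that the form is bounded.\<close>
lemma cmod_cinner_le: "cmod (cinner x y) \<le> 2 * norm x * norm y"
proof -
  have re: "\<bar>Re (cinner x y)\<bar> \<le> norm x * norm y"
    using Cauchy_Schwarz_ineq2[of x y] by (simp only: inner_is_Re_cinner)
  have "\<bar>Re (cinner x (\<i> *\<^sub>C y))\<bar> \<le> norm x * norm y"
    using Cauchy_Schwarz_ineq2[of x "\<i> *\<^sub>C y"] by (simp only: inner_is_Re_cinner norm_scaleC norm_ii mult_1)
  hence im: "\<bar>Im (cinner x y)\<bar> \<le> norm x * norm y"
    by (simp add: cinner_scaleC_right)
  show ?thesis using cmod_le[of "cinner x y"] re im by linarith
qed

lemma norm_add_square_plus_norm_diff_square:
  "(norm (x + (y::'a::real_inner)))\<^sup>2 + (norm (x - y))\<^sup>2 = 2 * ((norm x)\<^sup>2 + (norm y)\<^sup>2)"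
  unfolding power2_norm_eq_inner
  by (simp add: inner_add_left inner_add_right inner_diff_left inner_diff_right inner_commute)

lemma bounded_clinear_add: "bounded_clinear f \<Longrightarrow> f (x + y) = f x + f y"
  by (simp add: bounded_clinear_def)

lemma bounded_clinear_scaleC: "bounded_clinear f \<Longrightarrow> f (c *\<^sub>C x) = c *\<^sub>C f x"
  by (simp add: bounded_clinear_def)

lemma bounded_clinear_zero: "bounded_clinear f \<Longrightarrow> f 0 = 0"
  by (metis add_cancel_right_left bounded_clinear_add add_0)

lemma bounded_clinear_minus: "bounded_clinear f \<Longrightarrow> f (- x) = - f x"
  by (metis add_eq_0_iff bounded_clinear_add bounded_clinear_zero)

lemma bounded_clinear_diff: "bounded_clinear f \<Longrightarrow> f (x - y) = f x - f y"
  by (simp only: diff_conv_add_uminus bounded_clinear_add bounded_clinear_minus)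

definition euclid_form :: "nat \<Rightarrow> (nat \<Rightarrow> 'a::complex_inner \<Rightarrow> 'a) \<Rightarrow> 'a \<Rightarrow> real" where
  "euclid_form d T x = L2_set (\<lambda>k. cmod (cinner (T k x) x)) {..<d}"

lemma euclid_op_radius_eq_Sup:
  "euclid_op_radius d T = Sup (insert 0 (euclid_form d T ` {x. norm x = 1}))"
  unfolding euclid_op_radius_def euclid_form_def L2_set_def setcompr_eq_image by simp

lemma euclid_form_le_euclid_op_radius:
  "bdd_above (euclid_form d T ` {x. norm x = 1}) \<Longrightarrow> norm x = 1 \<Longrightarrow>
   euclid_form d T x \<le> euclid_op_radius d T"
  unfolding euclid_op_radius_eq_Sup by (rule cSup_upper) auto

lemma euclid_op_radius_nonneg:
  "bdd_above (euclid_form d T ` {x. norm x = 1}) \<Longrightarrow> 0 \<le> euclid_op_radius d T"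
  unfolding euclid_op_radius_eq_Sup by (rule cSup_upper) auto

lemma euclid_op_radius_le:
  "(\<And>x. norm x = 1 \<Longrightarrow> euclid_form d T x \<le> B) \<Longrightarrow> 0 \<le> B \<Longrightarrow> euclid_op_radius d T \<le> B"
  unfolding euclid_op_radius_eq_Sup by (rule cSup_least) auto

lemma bdd_above_euclid_form:
  assumes "\<And>k. k < d \<Longrightarrow> bounded_clinear (T k)"
  shows "bdd_above (euclid_form d T ` {x. norm x = 1})"
proof -
  obtain K where K: "\<And>k x. k < d \<Longrightarrow> norm (T k x) \<le> norm x * K k"
    using assms unfolding bounded_clinear_def by metis
  have "euclid_form d T x \<le> (\<Sum>k<d. 2 * K k)" if "norm x = 1" for x
  proof -
    have "euclid_form d T x \<le> (\<Sum>k<d. cmod (cinner (T k x) x))"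
      unfolding euclid_form_def by (rule L2_set_le_sum) simp
    also have "\<dots> \<le> (\<Sum>k<d. 2 * K k)"
    proof (rule sum_mono)
      fix k assume "k \<in> {..<d}"
      hence "norm (T k x) \<le> K k"
        using K[of k x] that by simp
      thus "cmod (cinner (T k x) x) \<le> 2 * K k"
        using cmod_cinner_le[of "T k x" x] that by simp
    qed
    finally show ?thesis .
  qed
  thus ?thesis by (intro bdd_aboveI2) auto
qed

lemma euclid_form_le_euclid_op_radius_mult_norm:
  assumes "\<And>k. k < d \<Longrightarrow> bounded_clinear (T k)"
  shows "euclid_form d T z \<le> euclid_op_radius d T * (norm z)\<^sup>2"
proof (cases "z = 0")
  case True
  thus ?thesis
    using assms unfolding euclid_form_def by (simp add: L2_set_0' bounded_clinear_zero)
next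
  case False
  define c where "c = complex_of_real (norm z)"
  define e where "e = inverse c *\<^sub>C z"
  have z_eq: "z = c *\<^sub>C e"
    using False unfolding e_def c_def by (simp add: scaleC_scaleC scaleC_one)
  have e_unit: "norm e = 1"
    using False unfolding e_def c_def by (simp add: norm_scaleC norm_inverse)
  have "cmod (cinner (T k z) z) = (norm z)\<^sup>2 * cmod (cinner (T k e) e)" if "k < d" for k
  proof -
    have "cinner (T k z) z = cnj c * c * cinner (T k e) e"
      unfolding z_eq using assms[OF that]
      by (simp add: bounded_clinear_scaleC cinner_scaleC_left cinner_scaleC_right)
    thus ?thesis by (simp add: c_def norm_mult power2_eq_square)
  qed
  hence "euclid_form d T z = L2_set (\<lambda>k. (norm z)\<^sup>2 * cmod (cinner (T k e) e)) {..<d}"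
    unfolding euclid_form_def by (intro L2_set_cong) auto
  also have "\<dots> = (norm z)\<^sup>2 * euclid_form d T e"
    unfolding euclid_form_def by (simp add: L2_set_right_distrib)
  also have "\<dots> \<le> (norm z)\<^sup>2 * euclid_op_radius d T"
    using euclid_form_le_euclid_op_radius[OF bdd_above_euclid_form[OF assms] e_unit]
    by (simp add: mult_left_mono)
  finally show ?thesis by (simp add: mult.commute)
qed

lemma euclid_op_radius_le_by_witness:
  fixes T :: "nat \<Rightarrow> 'a::complex_inner \<Rightarrow> 'a" and S :: "nat \<Rightarrow> 'b::complex_inner \<Rightarrow> 'b"
  assumes "bdd_above (euclid_form d S ` {p. norm p = 1})"
    and "\<And>x. norm x = 1 \<Longrightarrow> \<exists>p. norm p = 1 \<and> euclid_form d T x = euclid_form d S p"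
  shows "euclid_op_radius d T \<le> euclid_op_radius d S"
proof (rule euclid_op_radius_le)
  fix x :: 'a assume "norm x = 1"
  then obtain p where "norm p = 1" "euclid_form d T x = euclid_form d S p"
    using assms(2) by blast
  thus "euclid_form d T x \<le> euclid_op_radius d S"
    using euclid_form_le_euclid_op_radius[OF assms(1)] by simp
qed (rule euclid_op_radius_nonneg[OF assms(1)])

lemma cinner_block_tuple_Pair:
  assumes "bounded_clinear (X k)" "bounded_clinear (Y k)"
  shows "cinner (block_tuple X Y (tuple_neg Y) (tuple_neg X) k (x, y)) (x, y)
    = cinner (X k x) x - cinner (X k y) y + (\<i>/2) * (cinner (Y k (x + \<i> *\<^sub>C y)) (x + \<i> *\<^sub>C y)
        - cinner (Y k (x - \<i> *\<^sub>C y)) (x - \<i> *\<^sub>C y))"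
  using assms
  by (simp add: block_tuple_def tuple_neg_def cinner_prod_def bounded_clinear_add
      bounded_clinear_diff bounded_clinear_scaleC cinner_add_left cinner_add_right cinner_diff_left
      cinner_diff_right cinner_minus_left cinner_minus_right cinner_scaleC_left cinner_scaleC_right
      algebra_simps)

lemma cinner_block_tuple_scaleC_Pair:
  assumes "bounded_clinear (X k)" "bounded_clinear (Y k)"
  shows "cinner (block_tuple X Y (tuple_neg Y) (tuple_neg X) k (a *\<^sub>C x, b *\<^sub>C x)) (a *\<^sub>C x, b *\<^sub>C x)
    = (cnj a * a - cnj b * b) * cinner (X k x) x + (cnj b * a - cnj a * b) * cinner (Y k x) x"
  using assms
  by (simp add: block_tuple_def tuple_neg_def cinner_prod_def bounded_clinear_add
      bounded_clinear_diff bounded_clinear_minus bounded_clinear_scaleC cinner_add_left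
      cinner_add_right cinner_diff_left cinner_diff_right cinner_minus_left cinner_minus_right
      cinner_scaleC_left cinner_scaleC_right algebra_simps)

lemma euclid_form_block_tuple_le:
  fixes X Y :: "nat \<Rightarrow> 'a::complex_inner \<Rightarrow> 'a"
  assumes X: "\<And>k. k < d \<Longrightarrow> bounded_clinear (X k)"
    and Y: "\<And>k. k < d \<Longrightarrow> bounded_clinear (Y k)"
    and unit: "norm (x, y) = 1"
  shows "euclid_form d (block_tuple X Y (tuple_neg Y) (tuple_neg X)) (x, y)
           \<le> euclid_op_radius d X + euclid_op_radius d Y"
proof -
  define u where "u = x + \<i> *\<^sub>C y"
  define v where "v = x - \<i> *\<^sub>C y"
  define fX where "fX z k = cmod (cinner (X k z) z)" for z k
  define fY where "fY z k = cmod (cinner (Y k z) z)" for z k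
  have norm_xy: "(norm x)\<^sup>2 + (norm y)\<^sup>2 = 1"
    using unit unfolding norm_Pair by (metis real_sqrt_eq_1_iff)
  have norm_uv: "(norm u)\<^sup>2 + (norm v)\<^sup>2 = 2"
    using norm_add_square_plus_norm_diff_square[of x "\<i> *\<^sub>C y"] norm_xy
    unfolding u_def v_def by (simp add: norm_scaleC)
  have pointwise: "cmod (cinner (block_tuple X Y (tuple_neg Y) (tuple_neg X) k (x, y)) (x, y))
      \<le> (fX x k + fX y k) + 1/2 * (fY u k + fY v k)" if "k < d" for k
    unfolding cinner_block_tuple_Pair[where X = X and Y = Y and k = k, OF X[OF that] Y[OF that]]
      fX_def fY_def u_def v_def
    by (rule order_trans[OF norm_triangle_ineq] add_mono norm_triangle_ineq4)+
      (simp add: norm_mult norm_divide norm_triangle_ineq4)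
  have "euclid_form d (block_tuple X Y (tuple_neg Y) (tuple_neg X)) (x, y)
      \<le> L2_set (\<lambda>k. (fX x k + fX y k) + 1/2 * (fY u k + fY v k)) {..<d}"
    unfolding euclid_form_def using pointwise by (intro L2_set_mono) auto
  also have "\<dots> \<le> L2_set (\<lambda>k. fX x k + fX y k) {..<d}
                   + 1/2 * L2_set (\<lambda>k. fY u k + fY v k) {..<d}"
    by (rule order_trans[OF L2_set_triangle_ineq], subst L2_set_right_distrib[of "1/2", symmetric])
      simp_all
  also have "\<dots> \<le> (L2_set (fX x) {..<d} + L2_set (fX y) {..<d})
                   + 1/2 * (L2_set (fY u) {..<d} + L2_set (fY v) {..<d})"
    by (intro add_mono mult_left_mono L2_set_triangle_ineq) simp_all
  also have "\<dots> \<le> (euclid_op_radius d X * (norm x)\<^sup>2 + euclid_op_radius d X * (norm y)\<^sup>2)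
                   + 1/2 * (euclid_op_radius d Y * (norm u)\<^sup>2 + euclid_op_radius d Y * (norm v)\<^sup>2)"
    unfolding fX_def fY_def
    using X Y by (intro add_mono mult_left_mono
        euclid_form_le_euclid_op_radius_mult_norm[unfolded euclid_form_def]) auto
  also have "\<dots> = euclid_op_radius d X + euclid_op_radius d Y"
    using norm_xy norm_uv by (simp add: algebra_simps flip: distrib_left)
  finally show ?thesis .
qed

lemma euclid_op_radius_block_tuple_le:
  fixes X Y :: "nat \<Rightarrow> 'a::complex_inner \<Rightarrow> 'a"
  assumes "\<And>k. k < d \<Longrightarrow> bounded_clinear (X k)" "\<And>k. k < d \<Longrightarrow> bounded_clinear (Y k)"
  shows "euclid_op_radius d (block_tuple X Y (tuple_neg Y) (tuple_neg X))
           \<le> euclid_op_radius d X + euclid_op_radius d Y"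
proof (rule euclid_op_radius_le)
  show "euclid_form d (block_tuple X Y (tuple_neg Y) (tuple_neg X)) p
          \<le> euclid_op_radius d X + euclid_op_radius d Y" if "norm p = 1" for p
    using euclid_form_block_tuple_le[OF assms, where x = "fst p" and y = "snd p"] that by simp
  show "0 \<le> euclid_op_radius d X + euclid_op_radius d Y"
    using assms by (intro add_nonneg_nonneg euclid_op_radius_nonneg bdd_above_euclid_form) auto
qed

lemma bdd_above_euclid_form_block_tuple:
  fixes X Y :: "nat \<Rightarrow> 'a::complex_inner \<Rightarrow> 'a"
  assumes "\<And>k. k < d \<Longrightarrow> bounded_clinear (X k)" "\<And>k. k < d \<Longrightarrow> bounded_clinear (Y k)"
  shows "bdd_above (euclid_form d (block_tuple X Y (tuple_neg Y) (tuple_neg X)) ` {p. norm p = 1})"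
  using euclid_form_block_tuple_le[OF assms]
  by (intro bdd_aboveI2[where M = "euclid_op_radius d X + euclid_op_radius d Y"]) auto

lemma euclid_op_radius_le_block_tuple:
  fixes X Y :: "nat \<Rightarrow> 'a::complex_inner \<Rightarrow> 'a"
  assumes X: "\<And>k. k < d \<Longrightarrow> bounded_clinear (X k)"
    and Y: "\<And>k. k < d \<Longrightarrow> bounded_clinear (Y k)"
  shows "euclid_op_radius d X \<le> euclid_op_radius d (block_tuple X Y (tuple_neg Y) (tuple_neg X))"
    and "euclid_op_radius d Y \<le> euclid_op_radius d (block_tuple X Y (tuple_neg Y) (tuple_neg X))"
proof -
  define G where "G = block_tuple X Y (tuple_neg Y) (tuple_neg X)"
  have bdd: "bdd_above (euclid_form d G ` {p. norm p = 1})"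
    unfolding G_def using bdd_above_euclid_form_block_tuple[OF X Y] .
  have form_G: "cmod (cinner (G k (a *\<^sub>C x, b *\<^sub>C x)) (a *\<^sub>C x, b *\<^sub>C x))
      = cmod ((cnj a * a - cnj b * b) * cinner (X k x) x + (cnj b * a - cnj a * b) * cinner (Y k x) x)"
    if "k < d" for k a b x
    unfolding G_def cinner_block_tuple_scaleC_Pair[where X = X and Y = Y and k = k, OF X[OF that] Y[OF that]] ..
  show "euclid_op_radius d X \<le> euclid_op_radius d G"
  proof (rule euclid_op_radius_le_by_witness[OF bdd])
    fix x :: 'a assume "norm x = 1"
    hence "norm (1 *\<^sub>C x, 0 *\<^sub>C x) = 1"
      by (simp add: norm_Pair norm_scaleC)
    moreover have "euclid_form d X x = euclid_form d G (1 *\<^sub>C x, 0 *\<^sub>C x)"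
      unfolding euclid_form_def using form_G[where a = 1 and b = 0 and x = x] by (intro L2_set_cong) auto
    ultimately show "\<exists>p. norm p = 1 \<and> euclid_form d X x = euclid_form d G p" by blast
  qed
  show "euclid_op_radius d Y \<le> euclid_op_radius d G"
  proof (rule euclid_op_radius_le_by_witness[OF bdd])
    fix x :: 'a assume "norm x = 1"
    define c where "c = complex_of_real (1 / sqrt 2)"
    have "cnj c * c = 1/2"
      unfolding c_def by (simp flip: of_real_mult)
    hence coeffs: "cnj c * c - cnj (c * \<i>) * (c * \<i>) = 0"
        "cnj (c * \<i>) * c - cnj c * (c * \<i>) = - \<i>"
      by (simp_all add: algebra_simps)
    have "(cmod c)\<^sup>2 = 1/2"
      unfolding c_def norm_of_real by (simp add: power_divide)
    hence "norm (c *\<^sub>C x, (c * \<i>) *\<^sub>C x) = 1"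
      using \<open>norm x = 1\<close> by (simp add: norm_Pair norm_scaleC norm_mult)
    moreover have "euclid_form d Y x = euclid_form d G (c *\<^sub>C x, (c * \<i>) *\<^sub>C x)"
      unfolding euclid_form_def using form_G[where a = c and b = "c * \<i>" and x = x]
      by (intro L2_set_cong) (simp_all only: coeffs lessThan_iff, simp add: norm_mult)
    ultimately show "\<exists>p. norm p = 1 \<and> euclid_form d Y x = euclid_form d G p" by blast
  qed
qed

theorem theorem3p10:
  fixes X Y :: "nat \<Rightarrow> 'a::complex_hilbert \<Rightarrow> 'a" and d :: nat
  assumes "\<And>k. k < d \<Longrightarrow> bounded_clinear (X k)"
    and "\<And>k. k < d \<Longrightarrow> bounded_clinear (Y k)"
  shows "max (euclid_op_radius d X) (euclid_op_radius d Y)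
           \<le> euclid_op_radius d (block_tuple X Y (tuple_neg Y) (tuple_neg X))
         \<and> euclid_op_radius d (block_tuple X Y (tuple_neg Y) (tuple_neg X))
           \<le> euclid_op_radius d X + euclid_op_radius d Y"
  using euclid_op_radius_le_block_tuple[OF assms] euclid_op_radius_block_tuple_le[OF assms]
  by simp

end
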